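(* Let $n\ge2$ and $k\ge1$ be integers. Then $\mathcal{M}(n,k)\ge\binom{n+k-1}{k}$. Moreover, if a $(k,k)$-design $C\subset\mathbb{S}^{n-1}$ has exactly $\binom{n+k-1}{k}$ points, then for all distinct $x,y\in C$ the inner product $\langle x,y\rangle$ is a zero of $P_k^{(n+2)}(t)$.
   Context: For $m\ge 2$, let $P_i^{(m)}(t)$ be the normalized Gegenbauer polynomials: $P_0^{(m)}=1$, $P_1^{(m)}=t$, and $(i+m-2)P_{i+1}^{(m)}(t)=(2i+m-2)tP_i^{(m)}(t)-iP_{i-1}^{(m)}(t)$ for $i\ge1$. For a finite nonempty $C\subset\mathbb{S}^{n-1}$, its moments are $M_i(C)=\sum_{x,y\in C}P_i^{(n)}(\langle x,y\rangle)$. $C$ is a spherical $(k,k)$-design if $M_{2i}(C)=0$ for $i=1,\dots,k$. $\mathcal{M}(n,k)$ is the minimum cardinality of a $(k,k)$-design in $\mathbb{S}^{n-1}$. *)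

theory Defs
  imports "HOL-Analysis.Analysis"
begin

fun gegenbauer :: "nat \<Rightarrow> nat \<Rightarrow> real \<Rightarrow> real" where
  "gegenbauer m 0 t = 1"
| "gegenbauer m (Suc 0) t = t"
| "gegenbauer m (Suc (Suc i)) t =
     ((2 * real (Suc i) + real m - 2) * t * gegenbauer m (Suc i) t
       - real (Suc i) * gegenbauer m i t) / (real (Suc i) + real m - 2)"

definition sphere_moment :: "nat \<Rightarrow> (real ^ 'n) set \<Rightarrow> real" where
  "sphere_moment i C = (\<Sum>x\<in>C. \<Sum>y\<in>C. gegenbauer CARD('n) i (x \<bullet> y))"

definition kk_design :: "nat \<Rightarrow> (real ^ 'n) set \<Rightarrow> bool" where
  "kk_design k C \<longleftrightarrow> finite C \<and> C \<noteq> {} \<and> C \<subseteq> sphere 0 1 \<and>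
     (\<forall>i\<in>{1..k}. sphere_moment (2 * i) C = 0)"

end

theory Submission
  imports Defs
begin

text \<open>Let \<open>Q = P\<^sub>k\<^sup>(\<^sup>n\<^sup>+\<^sup>2\<^sup>)\<close> and \<open>D = (n + k - 1 choose k)\<close>.
  In the basis \<open>P\<^sub>i = P\<^sub>i\<^sup>(\<^sup>n\<^sup>)\<close> one has \<open>D Q = \<Sum> r\<^sub>i P\<^sub>i\<close>, summed over \<open>i \<le> k\<close>
  with \<open>i \<equiv> k (mod 2)\<close>, where \<open>r\<^sub>i\<close> is the dimension of the degree \<open>i\<close> spherical harmonics.
  The orthogonality relations say that the constant coefficient of \<open>P\<^sub>i P\<^sub>j\<close> is
  \<open>\<delta>\<^sub>i\<^sub>j / r\<^sub>i\<close>, so \<open>Q\<^sup>2\<close> is an even combination of \<open>P\<^sub>0, \<dots>, P\<^sub>2\<^sub>k\<close> with constant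
  coefficient \<open>\<Sum> r\<^sub>i / D\<^sup>2 = Q(1) / D = 1 / D\<close>. All moments \<open>M\<^sub>2, \<dots>, M\<^sub>2\<^sub>k\<close> of a
  \<open>(k,k)\<close>-design vanish, hence \<open>\<Sum>\<^sub>x\<^sub>,\<^sub>y Q(\<langle>x,y\<rangle>)\<^sup>2 = N\<^sup>2 / D\<close> for \<open>N = |C|\<close>. The diagonal
  contributes \<open>N\<close> and the off-diagonal terms are squares, so \<open>N\<^sup>2 / D \<ge> N\<close>, with equality
  iff \<open>Q(\<langle>x,y\<rangle>) = 0\<close> for all \<open>x \<noteq> y\<close>.\<close>

text \<open>\<open>homog_dim n k\<close> is the dimension of the homogeneous polynomials of degree \<open>k\<close> in \<open>n\<close>
  variables and \<open>harm_dim n i\<close> that of the spherical harmonics of degree \<open>i\<close> on \<open>S\<^sup>n\<^sup>-\<^sup>1\<close>,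
  namely \<open>homog_dim n i - homog_dim n (i - 2)\<close> for \<open>i \<ge> 2\<close>. The case \<open>i = 0\<close> is separate
  because the closed form is \<open>0 / 0\<close> there when \<open>n = 2\<close>.\<close>

definition homog_dim :: "nat \<Rightarrow> nat \<Rightarrow> real" where
  "homog_dim n k = real ((n + k - 1) choose k)"

definition harm_dim :: "nat \<Rightarrow> nat \<Rightarrow> real" where
  "harm_dim n i = (if i = 0 then 1 else
     homog_dim n i * (2 * real i + real n - 2) * (real n - 1)
       / ((real n + real i - 1) * (real n + real i - 2)))"

lemma homog_dim_pos: "n \<ge> 1 \<Longrightarrow> homog_dim n k > 0"
  by (simp add: homog_dim_def)

lemma homog_dim_Suc:
  assumes "n \<ge> 1"
  shows "homog_dim n (Suc k) = homog_dim n k * (real n + real k) / (real k + 1)"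
proof -
  have "(n + k) * ((n + k - 1) choose k) = ((n + k) choose Suc k) * Suc k"
    using Suc_times_binomial_eq[of "n + k - 1" k] assms by simp
  then have "(real n + real k) * homog_dim n k = homog_dim n (Suc k) * (real k + 1)"
    unfolding homog_dim_def using assms
    by (metis add_Suc_right diff_Suc_1 of_nat_Suc of_nat_add of_nat_mult add.commute)
  then show ?thesis by (simp add: field_simps)
qed

lemma harm_dim_pos: "n \<ge> 2 \<Longrightarrow> harm_dim n i > 0"
  using homog_dim_pos[of n i] by (auto simp: harm_dim_def)

lemma harm_dim_1: "n \<ge> 2 \<Longrightarrow> harm_dim n 1 = real n"
  using homog_dim_Suc[of n 0] by (simp add: harm_dim_def homog_dim_def field_simps)

lemma harm_dim_Suc:
  assumes "n \<ge> 2"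
  shows "harm_dim n (Suc i) * ((real i + 1) * (2 * real i + real n - 2))
       = harm_dim n i * ((2 * real i + real n) * (real i + real n - 2))"
proof (cases "i = 0")
  case True
  then show ?thesis using harm_dim_1[OF assms] by (simp add: harm_dim_def)
next
  case False
  have ne: "real n + real i - 1 \<noteq> 0" "real n + real i - 2 \<noteq> 0" "real i + real n - 2 \<noteq> 0"
    "real n + real i \<noteq> 0" "real i + 1 \<noteq> 0"
    using assms False by auto
  have harm_Suc: "harm_dim n (Suc i) = homog_dim n i * (real n + real i) / (real i + 1)
      * (2 * real i + real n) * (real n - 1) / ((real n + real i) * (real n + real i - 1))"
    using homog_dim_Suc[of n i] assms by (simp add: harm_dim_def algebra_simps)
  have harm: "harm_dim n i = homog_dim n i * (2 * real i + real n - 2) * (real n - 1)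
      / ((real n + real i - 1) * (real n + real i - 2))"
    using False by (simp add: harm_dim_def)
  show ?thesis
    unfolding harm_Suc harm using ne by (simp add: divide_simps)
qed

lemma gegenbauer_at_1: "m \<ge> 2 \<Longrightarrow> gegenbauer m i 1 = 1"
  by (induction m i "1::real" rule: gegenbauer.induct) (simp_all add: field_simps)

lemma gegenbauer_rec:
  assumes "m \<ge> 2"
  shows "(real k + real m - 2) * gegenbauer m (Suc k) t
     = (2 * real k + real m - 2) * t * gegenbauer m k t - real k * gegenbauer m (k - 1) t"
  using assms by (cases k) (simp_all add: field_simps)

declare gegenbauer.simps(3)[simp del]

lemma t_times_gegenbauer:
  assumes "n \<ge> 2"
  shows "t * gegenbauer n (Suc j) t
       = (real j + real n - 1) / (2 * real j + real n) * gegenbauer n (Suc (Suc j)) t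
         + (real j + 1) / (2 * real j + real n) * gegenbauer n j t"
  using gegenbauer_rec[OF assms, of "Suc j" t] assms by (simp add: divide_simps)

lemma gegenbauer_contiguous:
  assumes "n \<ge> 2"
  shows "(real n - 1) * gegenbauer n k t
       = (real n + real k - 1) * gegenbauer (n + 2) k t - real k * t * gegenbauer (n + 2) (k - 1) t"
proof (induction k rule: induct_nat_012)
  case (ge2 k)
  let ?P = "\<lambda>i. gegenbauer n i t" and ?Q = "\<lambda>i. gegenbauer (n + 2) i t"
  have IH: "(real n - 1) * ?P k = (real n + real k - 1) * ?Q k - real k * t * ?Q (k - 1)"
    "(real n - 1) * ?P (Suc k) = (real n + real k) * ?Q (Suc k) - (real k + 1) * t * ?Q k"
    using ge2 by simp_all
  have P_rec: "(real k + real n - 1) * ?P (Suc (Suc k))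
      = (2 * real k + real n) * t * ?P (Suc k) - (real k + 1) * ?P k"
    using gegenbauer_rec[OF assms, of "Suc k" t] by (simp add: algebra_simps)
  have Q_rec: "(real k + real n) * ?Q (Suc k) = (2 * real k + real n) * t * ?Q k - real k * ?Q (k - 1)"
    "(real n + real (Suc (Suc k)) - 1) * ?Q (Suc (Suc k))
      = (2 * real k + real n + 2) * t * ?Q (Suc k) - (real k + 1) * ?Q k"
    using gegenbauer_rec[of "n + 2" k t] gegenbauer_rec[of "n + 2" "Suc k" t] assms
    by (simp_all add: algebra_simps)
  have "(real k + real n - 1) * ((real n - 1) * ?P (Suc (Suc k)))
      = (real n - 1) * ((real k + real n - 1) * ?P (Suc (Suc k)))"
    by simp
  also have "\<dots> = (real n - 1) * ((2 * real k + real n) * t * ?P (Suc k) - (real k + 1) * ?P k)"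
    by (simp only: P_rec)
  also have "\<dots> = (2 * real k + real n) * t * ((real n - 1) * ?P (Suc k))
      - (real k + 1) * ((real n - 1) * ?P k)"
    by (simp add: algebra_simps)
  also have "\<dots> = (2 * real k + real n) * t * ((real n + real k) * ?Q (Suc k) - (real k + 1) * t * ?Q k)
      - (real k + 1) * ((real n + real k - 1) * ?Q k - real k * t * ?Q (k - 1))"
    by (simp only: IH)
  also have "\<dots> = (real k + real n - 1) * ((real n + real k) * t * ?Q (Suc k) - (real k + 1) * ?Q k)
      + (real k + 1) * t
        * ((real k + real n) * ?Q (Suc k) - ((2 * real k + real n) * t * ?Q k - real k * ?Q (k - 1)))"
    by (simp add: algebra_simps)
  also have "\<dots> = (real k + real n - 1)
      * (((2 * real k + real n + 2) * t * ?Q (Suc k) - (real k + 1) * ?Q k) - real (Suc (Suc k)) * t * ?Q (Suc k))"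
    by (simp only: Q_rec(1)) (simp add: algebra_simps)
  also have "\<dots> = (real k + real n - 1)
      * ((real n + real (Suc (Suc k)) - 1) * ?Q (Suc (Suc k)) - real (Suc (Suc k)) * t * ?Q (Suc k))"
    by (simp only: Q_rec(2))
  finally have "(real k + real n - 1) * ((real n - 1) * ?P (Suc (Suc k)))
      = (real k + real n - 1)
        * ((real n + real (Suc (Suc k)) - 1) * ?Q (Suc (Suc k)) - real (Suc (Suc k)) * t * ?Q (Suc k))" .
  moreover have "real k + real n - 1 \<noteq> 0"
    using assms by simp
  ultimately show ?case
    by (metis mult_left_cancel diff_Suc_1)
qed (simp_all add: algebra_simps)

lemma homog_dim_gegenbauer_Suc_Suc:
  assumes "n \<ge> 2"
  shows "homog_dim n (Suc (Suc j)) * gegenbauer (n + 2) (Suc (Suc j)) t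
       = homog_dim n j * gegenbauer (n + 2) j t + harm_dim n (Suc (Suc j)) * gegenbauer n (Suc (Suc j)) t"
proof -
  let ?P = "gegenbauer n (Suc (Suc j)) t" and ?Q = "\<lambda>i. gegenbauer (n + 2) i t"
  let ?D = "homog_dim n j"
  have contig:
    "(real n - 1) * ?P = (real n + real j + 1) * ?Q (Suc (Suc j)) - (real j + 2) * t * ?Q (Suc j)"
    using gegenbauer_contiguous[OF assms, of "Suc (Suc j)" t] by (simp add: algebra_simps)
  have Q_rec: "(2 * real j + real n + 2) * t * ?Q (Suc j)
      = (real n + real j + 1) * ?Q (Suc (Suc j)) + (real j + 1) * ?Q j"
    using gegenbauer_rec[of "n + 2" "Suc j" t] assms by (simp add: algebra_simps)
  have "(2 * real j + real n + 2) * ((real n - 1) * ?P)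
      = (2 * real j + real n + 2) * (real n + real j + 1) * ?Q (Suc (Suc j))
        - (real j + 2) * ((2 * real j + real n + 2) * t * ?Q (Suc j))"
    unfolding contig by (simp add: algebra_simps)
  also have "\<dots> = (2 * real j + real n + 2) * (real n + real j + 1) * ?Q (Suc (Suc j))
        - (real j + 2) * ((real n + real j + 1) * ?Q (Suc (Suc j)) + (real j + 1) * ?Q j)"
    by (simp only: Q_rec)
  finally have elim: "(2 * real j + real n + 2) * ((real n - 1) * ?P)
      = (real n + real j) * (real n + real j + 1) * ?Q (Suc (Suc j)) - (real j + 1) * (real j + 2) * ?Q j"
    by (simp add: algebra_simps)
  have ne: "real j + 1 \<noteq> 0" "real j + 2 \<noteq> 0" "real n + real j + 1 \<noteq> 0" "real n + real j \<noteq> 0"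
    using assms by auto
  have D: "homog_dim n (Suc (Suc j))
      = ?D * (real n + real j) * (real n + real j + 1) / ((real j + 1) * (real j + 2))"
    using homog_dim_Suc[of n "Suc j"] homog_dim_Suc[of n j] assms by (simp add: field_simps)
  have "harm_dim n (Suc (Suc j)) = homog_dim n (Suc (Suc j)) * (2 * real j + real n + 2) * (real n - 1)
      / ((real n + real j + 1) * (real n + real j))"
    by (simp add: harm_dim_def algebra_simps)
  then have r: "harm_dim n (Suc (Suc j))
      = ?D * (2 * real j + real n + 2) * (real n - 1) / ((real j + 1) * (real j + 2))"
    using ne by (simp add: D divide_simps)
  have "homog_dim n (Suc (Suc j)) * ?Q (Suc (Suc j)) - ?D * ?Q j
      = ?D / ((real j + 1) * (real j + 2))
        * ((real n + real j) * (real n + real j + 1) * ?Q (Suc (Suc j)) - (real j + 1) * (real j + 2) * ?Q j)"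
    unfolding D using ne by (simp add: divide_simps) (simp add: algebra_simps)
  also have "\<dots> = harm_dim n (Suc (Suc j)) * ?P"
    unfolding elim[symmetric] r by (simp add: field_simps)
  finally show ?thesis
    by simp
qed

lemma gegenbauer_shift_expansion:
  assumes "n \<ge> 2"
  shows "homog_dim n k * gegenbauer (n + 2) k t
       = (\<Sum>i \<in> {i. i \<le> k \<and> even (k - i)}. harm_dim n i * gegenbauer n i t)"
proof (induction k rule: induct_nat_012)
  case 0
  then show ?case
    by (simp add: homog_dim_def harm_dim_def)
next
  case 1
  have "{i. i \<le> Suc 0 \<and> even (Suc 0 - i)} = {1}"
    by (auto simp: le_Suc_eq)
  then show ?case
    using homog_dim_Suc[of n 0] harm_dim_1[OF assms] assms by (simp add: homog_dim_def)
next
  case (ge2 k)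
  have "{i. i \<le> Suc (Suc k) \<and> even (Suc (Suc k) - i)} = insert (Suc (Suc k)) {i. i \<le> k \<and> even (k - i)}"
    by (auto simp: le_Suc_eq Suc_diff_le)
  then show ?case
    using ge2(1) homog_dim_gegenbauer_Suc_Suc[OF assms, of k t] by simp
qed

text \<open>\<open>gegenbauer_expansion m d c f\<close>: \<open>f\<close> is a combination of the \<open>P\<^sub>l\<^sup>(\<^sup>m\<^sup>)\<close>
  with \<open>l \<le> d\<close> and \<open>l \<equiv> d (mod 2)\<close>, and \<open>c\<close> is its coefficient at \<open>P\<^sub>0\<close>, the only
  coefficient a \<open>(k,k)\<close>-design detects.\<close>

definition gegenbauer_expansion :: "nat \<Rightarrow> nat \<Rightarrow> real \<Rightarrow> (real \<Rightarrow> real) \<Rightarrow> bool" where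
  "gegenbauer_expansion m d c f \<longleftrightarrow>
     (\<exists>a. a 0 = c \<and> (\<forall>l. odd (d + l) \<longrightarrow> a l = 0) \<and> (\<forall>t. f t = (\<Sum>l\<le>d. a l * gegenbauer m l t)))"

lemma gegenbauer_expansion_gegenbauer:
  "gegenbauer_expansion m d (if d = 0 then 1 else 0) (gegenbauer m d)"
proof -
  have "(\<Sum>l\<le>d. (if l = d then 1 else 0) * gegenbauer m l t) = gegenbauer m d t" for t
    by (simp add: if_distrib[of "\<lambda>x. x * _"] cong: if_cong)
  then show ?thesis
    unfolding gegenbauer_expansion_def by (intro exI[of _ "\<lambda>l. if l = d then 1 else 0"]) auto
qed

lemma gegenbauer_expansion_zero: "gegenbauer_expansion m d 0 (\<lambda>t. 0)"
  unfolding gegenbauer_expansion_def by (rule exI[of _ "\<lambda>l. 0"]) simp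

lemma gegenbauer_expansion_scale:
  assumes "gegenbauer_expansion m d c f"
  shows "gegenbauer_expansion m d (r * c) (\<lambda>t. r * f t)"
proof -
  obtain a where "a 0 = c" "\<forall>l. odd (d + l) \<longrightarrow> a l = 0"
    "\<forall>t. f t = (\<Sum>l\<le>d. a l * gegenbauer m l t)"
    using assms unfolding gegenbauer_expansion_def by blast
  then show ?thesis
    unfolding gegenbauer_expansion_def
    by (intro exI[of _ "\<lambda>l. r * a l"]) (simp add: sum_distrib_left mult.assoc)
qed

lemma gegenbauer_expansion_add:
  assumes "gegenbauer_expansion m d c f" "gegenbauer_expansion m d c' g"
  shows "gegenbauer_expansion m d (c + c') (\<lambda>t. f t + g t)"
proof -
  obtain a b where "a 0 = c" "\<forall>l. odd (d + l) \<longrightarrow> a l = 0"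
    "\<forall>t. f t = (\<Sum>l\<le>d. a l * gegenbauer m l t)"
    "b 0 = c'" "\<forall>l. odd (d + l) \<longrightarrow> b l = 0"
    "\<forall>t. g t = (\<Sum>l\<le>d. b l * gegenbauer m l t)"
    using assms unfolding gegenbauer_expansion_def by blast
  then show ?thesis
    unfolding gegenbauer_expansion_def
    by (intro exI[of _ "\<lambda>l. a l + b l"]) (simp add: sum.distrib distrib_right)
qed

lemma gegenbauer_expansion_diff:
  assumes "gegenbauer_expansion m d c f" "gegenbauer_expansion m d c' g"
  shows "gegenbauer_expansion m d (c - c') (\<lambda>t. f t - g t)"
  using gegenbauer_expansion_add[OF assms(1) gegenbauer_expansion_scale[OF assms(2), of "-1"]] by simp

lemma gegenbauer_expansion_sum:
  assumes "finite S" "\<And>i. i \<in> S \<Longrightarrow> gegenbauer_expansion m d (c i) (f i)"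
  shows "gegenbauer_expansion m d (\<Sum>i\<in>S. c i) (\<lambda>t. \<Sum>i\<in>S. f i t)"
  using assms by (induction S rule: finite_induct)
    (simp_all add: gegenbauer_expansion_zero gegenbauer_expansion_add)

lemma gegenbauer_expansion_mono:
  assumes "gegenbauer_expansion m d c f" "d \<le> d'" "even (d' - d)"
  shows "gegenbauer_expansion m d' c f"
proof -
  obtain a where a: "a 0 = c" "\<forall>l. odd (d + l) \<longrightarrow> a l = 0"
    "\<forall>t. f t = (\<Sum>l\<le>d. a l * gegenbauer m l t)"
    using assms(1) unfolding gegenbauer_expansion_def by blast
  let ?b = "\<lambda>l. if l \<le> d then a l else 0"
  have "(\<Sum>l\<le>d'. ?b l * gegenbauer m l t) = (\<Sum>l\<le>d. ?b l * gegenbauer m l t)" for t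
    by (rule sum.mono_neutral_right) (use assms(2) in auto)
  moreover have "odd (d' + l) \<Longrightarrow> ?b l = 0" for l
    using a(2) assms(2,3) by (metis dvd_diff_nat le_add_diff_inverse odd_add)
  ultimately show ?thesis
    unfolding gegenbauer_expansion_def using a by (intro exI[of _ ?b]) auto
qed

text \<open>The mean of \<open>P\<^sub>i\<^sup>(\<^sup>n\<^sup>)(\<langle>x,e\<rangle>) P\<^sub>j\<^sup>(\<^sup>n\<^sup>)(\<langle>x,e\<rangle>)\<close> over \<open>x \<in> S\<^sup>n\<^sup>-\<^sup>1\<close>; it is obtained
  below, without integration, as the \<open>P\<^sub>0\<close>-coefficient of \<open>P\<^sub>i P\<^sub>j\<close>.\<close>

definition gegenbauer_inner :: "nat \<Rightarrow> nat \<Rightarrow> nat \<Rightarrow> real" where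
  "gegenbauer_inner n i j = (if i = j then 1 / harm_dim n i else 0)"

lemma gegenbauer_Suc_Suc_times_Suc:
  assumes "n \<ge> 2"
  shows "gegenbauer n (Suc (Suc i)) t * gegenbauer n (Suc j) t
       = (2 * real i + real n) / (real i + real n - 1)
           * ((real j + real n - 1) / (2 * real j + real n) * (gegenbauer n (Suc i) t * gegenbauer n (Suc (Suc j)) t)
              + (real j + 1) / (2 * real j + real n) * (gegenbauer n (Suc i) t * gegenbauer n j t))
         - (real i + 1) / (real i + real n - 1) * (gegenbauer n i t * gegenbauer n (Suc j) t)"
proof -
  let ?A = "(2 * real i + real n) / (real i + real n - 1)"
    and ?B = "(real i + 1) / (real i + real n - 1)"
  let ?P = "\<lambda>k. gegenbauer n k t"
  have "real i + real n - 1 \<noteq> 0"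
    using assms by simp
  then have rec: "?P (Suc (Suc i)) = ?A * (t * ?P (Suc i)) - ?B * ?P i"
    using gegenbauer_rec[OF assms, of "Suc i" t] by (simp add: divide_simps) (simp add: algebra_simps)
  have "?P (Suc (Suc i)) * ?P (Suc j)
      = ?A * (?P (Suc i) * (t * ?P (Suc j))) - ?B * (?P i * ?P (Suc j))"
    unfolding rec by (simp add: algebra_simps)
  also have "\<dots> = ?A * ((real j + real n - 1) / (2 * real j + real n) * (?P (Suc i) * ?P (Suc (Suc j)))
        + (real j + 1) / (2 * real j + real n) * (?P (Suc i) * ?P j)) - ?B * (?P i * ?P (Suc j))"
    unfolding t_times_gegenbauer[OF assms] by (simp only: distrib_left mult.left_commute)
  finally show ?thesis .
qed

lemma gegenbauer_inner_Suc_Suc: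
  assumes "n \<ge> 2"
  shows "gegenbauer_inner n (Suc (Suc i)) (Suc j)
       = (2 * real i + real n) / (real i + real n - 1)
           * ((real j + real n - 1) / (2 * real j + real n) * gegenbauer_inner n (Suc i) (Suc (Suc j))
              + (real j + 1) / (2 * real j + real n) * gegenbauer_inner n (Suc i) j)
         - (real i + 1) / (real i + real n - 1) * gegenbauer_inner n i (Suc j)"
proof -
  have pos: "harm_dim n i > 0" "harm_dim n (Suc i) > 0" "harm_dim n (Suc (Suc i)) > 0"
    using harm_dim_pos[OF assms] by auto
  have ne: "real i + real n - 1 \<noteq> 0" "2 * real i + real n + 2 \<noteq> 0"
    using assms by auto
  consider "i = Suc j" | "j = Suc i" | "i \<noteq> Suc j" "j \<noteq> Suc i"
    by blast
  then show ?thesis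
  proof cases
    case 1
    then have "real j = real i - 1" "2 * real i + real n - 2 \<noteq> 0" "real i + real n - 2 \<noteq> 0"
      using assms by auto
    then show ?thesis
      using 1 harm_dim_Suc[OF assms, of i] pos ne
      by (simp add: gegenbauer_inner_def divide_simps) (simp add: algebra_simps)
  next
    case 2
    then have "real j = real i + 1"
      by simp
    then show ?thesis
      using 2 harm_dim_Suc[OF assms, of "Suc i"] pos ne
      by (simp add: gegenbauer_inner_def divide_simps) (simp add: algebra_simps)
  next
    case 3
    then show ?thesis
      by (simp add: gegenbauer_inner_def)
  qed
qed

lemma t_times_gegenbauer_expansion:
  assumes "n \<ge> 2"
  shows "gegenbauer_expansion n (Suc (Suc j)) (if j = 0 then 1 / real n else 0)
      (\<lambda>t. t * gegenbauer n (Suc j) t)"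
proof -
  let ?\<alpha> = "(real j + real n - 1) / (2 * real j + real n)"
    and ?\<beta> = "(real j + 1) / (2 * real j + real n)"
  have "gegenbauer_expansion n (Suc (Suc j)) (if j = 0 then 1 else 0) (gegenbauer n j)"
    by (rule gegenbauer_expansion_mono[OF gegenbauer_expansion_gegenbauer]) auto
  then have "gegenbauer_expansion n (Suc (Suc j))
      (?\<alpha> * (if Suc (Suc j) = 0 then 1 else 0) + ?\<beta> * (if j = 0 then 1 else 0))
      (\<lambda>t. ?\<alpha> * gegenbauer n (Suc (Suc j)) t + ?\<beta> * gegenbauer n j t)"
    by (intro gegenbauer_expansion_add gegenbauer_expansion_scale gegenbauer_expansion_gegenbauer)
  moreover have "(\<lambda>t. t * gegenbauer n (Suc j) t)
      = (\<lambda>t. ?\<alpha> * gegenbauer n (Suc (Suc j)) t + ?\<beta> * gegenbauer n j t)"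
    by (simp add: t_times_gegenbauer[OF assms])
  moreover have "(if j = 0 then 1 / real n else 0)
      = ?\<alpha> * (if Suc (Suc j) = 0 then 1 else 0) + ?\<beta> * (if j = 0 then 1 else 0)"
    by simp
  ultimately show ?thesis
    by (simp only:)
qed

lemma gegenbauer_product_expansion_Suc_Suc:
  fixes n i j :: nat
  defines "P \<equiv> gegenbauer n" and "c \<equiv> gegenbauer_inner n"
  assumes "n \<ge> 2"
    and "gegenbauer_expansion n (Suc i + Suc (Suc j)) (c (Suc i) (Suc (Suc j)))
      (\<lambda>t. P (Suc i) t * P (Suc (Suc j)) t)"
    and "gegenbauer_expansion n (Suc i + j) (c (Suc i) j) (\<lambda>t. P (Suc i) t * P j t)"
    and "gegenbauer_expansion n (i + Suc j) (c i (Suc j)) (\<lambda>t. P i t * P (Suc j) t)"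
  shows "gegenbauer_expansion n (Suc (Suc i) + Suc j) (c (Suc (Suc i)) (Suc j))
      (\<lambda>t. P (Suc (Suc i)) t * P (Suc j) t)"
proof -
  let ?d = "Suc (Suc i) + Suc j"
  let ?A = "(2 * real i + real n) / (real i + real n - 1)"
    and ?B = "(real i + 1) / (real i + real n - 1)"
  let ?\<alpha> = "(real j + real n - 1) / (2 * real j + real n)"
    and ?\<beta> = "(real j + 1) / (2 * real j + real n)"
  have "gegenbauer_expansion n ?d (c (Suc i) (Suc (Suc j)))
      (\<lambda>t. P (Suc i) t * P (Suc (Suc j)) t)"
    using assms(4) by simp
  moreover have "gegenbauer_expansion n ?d (c (Suc i) j) (\<lambda>t. P (Suc i) t * P j t)"
    by (rule gegenbauer_expansion_mono[OF assms(5)]) auto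
  moreover have "gegenbauer_expansion n ?d (c i (Suc j)) (\<lambda>t. P i t * P (Suc j) t)"
    by (rule gegenbauer_expansion_mono[OF assms(6)]) auto
  ultimately have "gegenbauer_expansion n ?d
      (?A * (?\<alpha> * c (Suc i) (Suc (Suc j)) + ?\<beta> * c (Suc i) j) - ?B * c i (Suc j))
      (\<lambda>t. ?A * (?\<alpha> * (P (Suc i) t * P (Suc (Suc j)) t) + ?\<beta> * (P (Suc i) t * P j t))
        - ?B * (P i t * P (Suc j) t))"
    by (intro gegenbauer_expansion_diff gegenbauer_expansion_add gegenbauer_expansion_scale)
  then show ?thesis
    unfolding P_def c_def gegenbauer_inner_Suc_Suc[OF assms(3)] gegenbauer_Suc_Suc_times_Suc[OF assms(3)]
    .
qed

lemma gegenbauer_product_expansion: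
  assumes "n \<ge> 2"
  shows "gegenbauer_expansion n (i + j) (gegenbauer_inner n i j)
      (\<lambda>t. gegenbauer n i t * gegenbauer n j t)"
proof (induction i arbitrary: j rule: induct_nat_012)
  case 0
  have "gegenbauer_inner n 0 j = (if j = 0 then 1 else 0)"
    by (simp add: gegenbauer_inner_def harm_dim_def)
  then show ?case
    using gegenbauer_expansion_gegenbauer[of n j] by simp
next
  case 1
  show ?case
  proof (cases j)
    case 0
    then show ?thesis
      using gegenbauer_expansion_gegenbauer[of n 1]
      by (simp add: gegenbauer_inner_def del: gegenbauer.simps(2))
  next
    case (Suc j')
    have "(\<lambda>t. gegenbauer n (Suc 0) t * gegenbauer n j t)
        = (\<lambda>t. t * gegenbauer n (Suc j') t)"
      using Suc by simp
    moreover have "gegenbauer_inner n (Suc 0) j = (if j' = 0 then 1 / real n else 0)"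
      using Suc harm_dim_1[OF assms] by (simp add: gegenbauer_inner_def)
    ultimately show ?thesis
      using t_times_gegenbauer_expansion[OF assms, of j'] Suc by simp
  qed
next
  case (ge2 i)
  show ?case
  proof (cases j)
    case 0
    then show ?thesis
      using gegenbauer_expansion_gegenbauer[of n "Suc (Suc i)"] by (simp add: gegenbauer_inner_def)
  next
    case (Suc j')
    then show ?thesis
      using gegenbauer_product_expansion_Suc_Suc[OF assms ge2(2) ge2(2) ge2(1)] by simp
  qed
qed

lemma gegenbauer_shift_square_expansion:
  assumes "n \<ge> 2"
  shows "gegenbauer_expansion n (2 * k) (1 / homog_dim n k) (\<lambda>t. (gegenbauer (n + 2) k t)\<^sup>2)"
proof -
  let ?S = "{i. i \<le> k \<and> even (k - i)}" and ?r = "harm_dim n" and ?P = "gegenbauer n"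
  let ?D = "homog_dim n k"
  have "gegenbauer_expansion n (2 * k) (?r i * ?r j * gegenbauer_inner n i j)
      (\<lambda>t. ?r i * ?r j * (?P i t * ?P j t))" if "i \<in> ?S" "j \<in> ?S" for i j
  proof -
    have "i + j \<le> 2 * k" "even (2 * k - (i + j))"
      using that by auto
    then show ?thesis
      by (intro gegenbauer_expansion_scale
          gegenbauer_expansion_mono[OF gegenbauer_product_expansion[OF assms]])
  qed
  then have "gegenbauer_expansion n (2 * k)
      (\<Sum>i\<in>?S. \<Sum>j\<in>?S. ?r i * ?r j * gegenbauer_inner n i j)
      (\<lambda>t. \<Sum>i\<in>?S. \<Sum>j\<in>?S. ?r i * ?r j * (?P i t * ?P j t))"
    by (intro gegenbauer_expansion_sum) auto
  moreover have "(\<Sum>i\<in>?S. \<Sum>j\<in>?S. ?r i * ?r j * (?P i t * ?P j t))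
      = ?D\<^sup>2 * (gegenbauer (n + 2) k t)\<^sup>2" for t
  proof -
    have "(\<Sum>i\<in>?S. \<Sum>j\<in>?S. ?r i * ?r j * (?P i t * ?P j t))
        = (\<Sum>i\<in>?S. ?r i * ?P i t) * (\<Sum>j\<in>?S. ?r j * ?P j t)"
      by (simp add: sum_product mult_ac)
    also have "\<dots> = ?D\<^sup>2 * (gegenbauer (n + 2) k t)\<^sup>2"
      unfolding gegenbauer_shift_expansion[OF assms, symmetric] by (simp add: power2_eq_square)
    finally show ?thesis .
  qed
  moreover have "(\<Sum>i\<in>?S. \<Sum>j\<in>?S. ?r i * ?r j * gegenbauer_inner n i j) = ?D"
  proof -
    have inner: "(\<Sum>j\<in>?S. ?r i * ?r j * gegenbauer_inner n i j) = ?r i" if "i \<in> ?S" for i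
      using that harm_dim_pos[OF assms, of i]
      by (auto simp: gegenbauer_inner_def if_distrib cong: if_cong)
    have "(\<Sum>i\<in>?S. \<Sum>j\<in>?S. ?r i * ?r j * gegenbauer_inner n i j)
        = (\<Sum>i\<in>?S. ?r i * ?P i 1)"
      by (rule sum.cong[OF refl]) (simp only: inner gegenbauer_at_1[OF assms] mult_1_right)
    also have "\<dots> = ?D"
      using gegenbauer_shift_expansion[OF assms, of k 1] gegenbauer_at_1[of "n + 2" k] assms by simp
    finally show ?thesis .
  qed
  ultimately have
    "gegenbauer_expansion n (2 * k) ?D (\<lambda>t. ?D\<^sup>2 * (gegenbauer (n + 2) k t)\<^sup>2)"
    by simp
  from gegenbauer_expansion_scale[OF this, of "1 / ?D\<^sup>2"] show ?thesis
    using homog_dim_pos[of n k] assms by (simp add: power2_eq_square)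
qed

lemma kk_design_gegenbauer_expansion_sum:
  fixes C :: "(real ^ 'n) set"
  assumes "kk_design k C" "gegenbauer_expansion CARD('n) (2 * k) c f"
  shows "(\<Sum>x\<in>C. \<Sum>y\<in>C. f (x \<bullet> y)) = real (card C) ^ 2 * c"
proof -
  obtain a where a: "a 0 = c" "\<forall>l. odd (2 * k + l) \<longrightarrow> a l = 0"
    "\<forall>t. f t = (\<Sum>l\<le>2 * k. a l * gegenbauer CARD('n) l t)"
    using assms(2) unfolding gegenbauer_expansion_def by blast
  have vanish: "a l * sphere_moment l C = 0" if "l \<in> {1..2 * k}" for l
  proof (cases "even l")
    case True
    then obtain i where "l = 2 * i"
      by blast
    with that assms(1) show ?thesis
      unfolding kk_design_def by auto
  qed (use a(2) in simp)
  have "(\<Sum>x\<in>C. \<Sum>y\<in>C. f (x \<bullet> y))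
      = (\<Sum>x\<in>C. \<Sum>l\<le>2 * k. \<Sum>y\<in>C. a l * gegenbauer CARD('n) l (x \<bullet> y))"
    unfolding a(3)[rule_format] by (intro sum.cong refl sum.swap)
  also have "\<dots> = (\<Sum>l\<le>2 * k. a l * sphere_moment l C)"
    unfolding sphere_moment_def sum_distrib_left by (rule sum.swap)
  also have "\<dots> = a 0 * sphere_moment 0 C + (\<Sum>l\<in>{1..2 * k}. a l * sphere_moment l C)"
    by (simp add: atMost_atLeast0 sum.atLeast_Suc_atMost)
  also have "\<dots> = a 0 * sphere_moment 0 C"
    using vanish by (simp add: sum.neutral)
  also have "\<dots> = real (card C) ^ 2 * c"
    using a(1) by (simp add: sphere_moment_def power2_eq_square)
  finally show ?thesis .
qed

lemma sum_sum_split_diagonal: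
  assumes "finite A"
  shows "(\<Sum>x\<in>A. \<Sum>y\<in>A. f x y) = (\<Sum>x\<in>A. f x x) + (\<Sum>x\<in>A. \<Sum>y\<in>A - {x}. f x y)"
  unfolding sum.distrib[symmetric] using assms by (intro sum.cong refl sum.remove)

lemma kk_design_offdiagonal_sum:
  fixes C :: "(real ^ 'n) set"
  assumes "CARD('n) \<ge> 2" "kk_design k C"
  shows "(\<Sum>x\<in>C. \<Sum>y\<in>C - {x}. (gegenbauer (CARD('n) + 2) k (x \<bullet> y))\<^sup>2)
       = real (card C) ^ 2 / homog_dim CARD('n) k - real (card C)"
proof -
  let ?Q = "gegenbauer (CARD('n) + 2) k"
  have fin: "finite C"
    using assms(2) unfolding kk_design_def by simp
  have unit: "x \<bullet> x = 1" if "x \<in> C" for x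
    using assms(2) that unfolding kk_design_def by (auto simp: norm_eq_1)
  have "(\<Sum>x\<in>C. (?Q (x \<bullet> x))\<^sup>2) = real (card C)"
    using unit gegenbauer_at_1[of "CARD('n) + 2" k] by simp
  moreover have "(\<Sum>x\<in>C. \<Sum>y\<in>C. (?Q (x \<bullet> y))\<^sup>2) = real (card C) ^ 2 / homog_dim CARD('n) k"
    using kk_design_gegenbauer_expansion_sum[OF assms(2) gegenbauer_shift_square_expansion[OF assms(1)]]
    by simp
  ultimately show ?thesis
    using sum_sum_split_diagonal[OF fin, where f = "\<lambda>x y. (?Q (x \<bullet> y))\<^sup>2"] by simp
qed

theorem mainTheorem3:
  fixes C :: "(real ^ 'n) set" and k :: nat
  assumes "CARD('n) \<ge> 2" and "k \<ge> 1" and "kk_design k C"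
  shows "card C \<ge> (CARD('n) + k - 1) choose k \<and>
         (card C = (CARD('n) + k - 1) choose k \<longrightarrow>
           (\<forall>x\<in>C. \<forall>y\<in>C. x \<noteq> y \<longrightarrow> gegenbauer (CARD('n) + 2) k (x \<bullet> y) = 0))"
proof -
  let ?N = "real (card C)" and ?D = "homog_dim CARD('n) k"
  let ?T = "\<Sum>x\<in>C. \<Sum>y\<in>C - {x}. (gegenbauer (CARD('n) + 2) k (x \<bullet> y))\<^sup>2"
  have fin: "finite C" and "C \<noteq> {}"
    using assms(3) unfolding kk_design_def by auto
  then have N: "?N > 0"
    by (simp add: card_gt_0_iff)
  have D: "?D > 0"
    using homog_dim_pos assms(1) by simp
  have T: "?T = ?N ^ 2 / ?D - ?N"
    using kk_design_offdiagonal_sum[OF assms(1,3)] .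
  have "?T \<ge> 0"
    by (intro sum_nonneg) simp
  then have "?N \<le> ?N ^ 2 / ?D"
    using T by linarith
  then have "?D \<le> ?N"
    using D N by (simp add: le_divide_eq power2_eq_square)
  moreover have "?T = 0" if "?D = ?N"
    using T that N by (simp add: power2_eq_square)
  then have "\<forall>x\<in>C. \<forall>y\<in>C - {x}. (gegenbauer (CARD('n) + 2) k (x \<bullet> y))\<^sup>2 = 0" if "?D = ?N"
    using that fin by (simp add: sum_nonneg_eq_0_iff sum_nonneg)
  ultimately show ?thesis
    unfolding homog_dim_def by auto
qed

end
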